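(* Let $\tilde\ell:\mathcal{W}\times\mathcal{Z}\to\mathbb{R}$ be any measurable (auxiliary) loss function and let \[ v_n=\mathbb{E}_{S'\sim(\mu')^{\otimes n}}\Big[\inf_{w\in\mathcal{W}}\frac1n\sum_{i=1}^n\tilde\ell(w,Z'_i)\Big]. \] Define for $r\ge0$ \[ \mathsf{D}_1(r)=\sup_{P_{W'|S'}:\ I(W';S')\le r}\mathbb{E}\big[L_\mu(W')-L_{S'}(W')\big],\qquad \tilde{\mathsf{D}}_2(r)=\sup_{\substack{P_{\hat W|\tilde Z}:\ I(\hat W;\tilde Z)\le r,\\ \mathbb{E}[\tilde\ell(\hat W,\tilde Z)]\ge v_n}}\mathbb{E}\big[L_\mu(\hat W)-\ell(\hat W,\tilde Z)\big], \] where in $\mathsf{D}_1$ the supremum is over Markov kernels from $\mathcal{Z}^n$ to $\mathcal{W}$ with $S'=(Z'_1,\dots,Z'_n)\sim(\mu')^{\otimes n}$, and in $\tilde{\mathsf{D}}_2$ over Markov kernels from $\mathcal{Z}$ to $\mathcal{W}$ with $\tilde Z\sim\mu'$. Then for all $r\ge0$, \[ \mathsf{D}_1(r)\le\tilde{\mathsf{D}}_2(r/n)\le\mathsf{D}_2(r/n), \] where $\mathsf{D}_2(r)=\sup_{P_{\hat W|Z'}:\ I(\hat W;Z')\le r}\mathbb{E}[L_\mu(\hat W)-\ell(\hat W,Z')]$ with $Z'\sim\mu'$.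
   Context: $\mathcal{Z},\mathcal{W}$ measurable spaces, $\ell:\mathcal{W}\times\mathcal{Z}\to[0,\infty)$ measurable loss, $\mu$ (test) and $\mu'$ (training) distributions on $\mathcal{Z}$, $L_\mu(w)=\mathbb{E}_{Z\sim\mu}\ell(w,Z)$, $L_s(w)=\frac1n\sum_{i=1}^n\ell(w,z_i)$. All expectations (including $v_n$) are assumed well defined and finite. $I(\cdot;\cdot)$ denotes mutual information. *)

theory Defs
  imports "HOL-Probability.Probability"
begin

text \<open>If P is absolutely continuous w.r.t. Q with density f = dP/dQ, then
  D(P||Q) = integral of f ln f dQ, which (P, Q probability measures) equals the
  nonnegative integral of (f ln f - f + 1) dQ; otherwise D(P||Q) = infinity.\<close>
definition KL_div :: "'a measure \<Rightarrow> 'a measure \<Rightarrow> ennreal" where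
  "KL_div P Q =
     (if sets P = sets Q \<and> absolutely_continuous Q P
      then (\<integral>\<^sup>+ x. ennreal (let f = enn2real (RN_deriv Q P x) in f * ln f - f + 1) \<partial>Q)
      else \<infinity>)"

definition mutual_info :: "'a measure \<Rightarrow> 'b measure \<Rightarrow> ('a \<times> 'b) measure \<Rightarrow> ennreal" where
  "mutual_info A B J = KL_div J (distr J A fst \<Otimes>\<^sub>M distr J B snd)"

definition joint_law :: "'a measure \<Rightarrow> ('a \<Rightarrow> 'b measure) \<Rightarrow> 'b measure \<Rightarrow> ('a \<times> 'b) measure" where
  "joint_law M K MW = M \<bind> (\<lambda>x. distr (K x) (M \<Otimes>\<^sub>M MW) (\<lambda>w. (x, w)))"

definition pop_risk :: "'z measure \<Rightarrow> ('w \<Rightarrow> 'z \<Rightarrow> real) \<Rightarrow> 'w \<Rightarrow> real" where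
  "pop_risk \<mu> loss w = (\<integral>z. loss w z \<partial>\<mu>)"

definition emp_risk :: "nat \<Rightarrow> ('w \<Rightarrow> 'z \<Rightarrow> real) \<Rightarrow> 'w \<Rightarrow> (nat \<Rightarrow> 'z) \<Rightarrow> real" where
  "emp_risk n loss w s = (\<Sum>i<n. loss w (s i)) / real n"

end

theory Submission
  imports Defs
begin

text \<open>Given a learner \<open>K\<close> on \<open>n\<close> samples, draw a uniform index \<open>I\<close>, put the single sample
  \<open>z\<close> at position \<open>I\<close>, draw the other coordinates freshly from \<open>\<mu>'\<close> and run \<open>K\<close>. The joint
  law of \<open>(z, W)\<close> under this symmetrized kernel is the average over \<open>i\<close> of the laws of
  \<open>(Z\<^sub>i, W)\<close>, so it reproduces the expected generalization gap and the expected auxiliary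
  empirical loss, which dominates \<open>v\<^sub>n\<close> because the infimum over \<open>w\<close> is at most the value at
  \<open>W\<close>. For the information constraint, let \<open>Z\<^sub>g(w) = \<integral>exp (g(z, w)) d\<mu>'(z)\<close>; the test function
  \<open>\<Sum>\<^sub>i (g(Z\<^sub>i, W) - ln Z\<^sub>g(W))\<close> has exponential moment 1 under the product of the marginals of
  \<open>(S, W)\<close>, so Donsker-Varadhan and Jensen for \<open>ln Z\<^sub>g\<close> give \<open>n \<cdot> I(W; z) \<le> I(W; S)\<close>. The
  second inequality only drops a constraint.\<close>

lemma mult_le_entropy_exp:
  fixes a t :: real
  assumes "0 \<le> a"
  shows "a * t \<le> a * ln a - a + exp t"
proof (cases "a = 0")
  case False
  then have a: "0 < a" using assms by simp
  have "a * (1 + (t - ln a)) \<le> a * exp (t - ln a)"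
    using a by (intro mult_left_mono exp_ge_add_one_self) auto
  also have "\<dots> = exp t" using a by (simp add: exp_diff)
  finally show ?thesis by (simp add: algebra_simps)
qed simp

lemma entropy_integrand_nonneg:
  fixes a :: real
  assumes "0 \<le> a"
  shows "0 \<le> a * ln a - a + 1"
  using mult_le_entropy_exp[OF assms, of 0] by simp

lemma integrable_bounded_on_space:
  fixes f :: "'a \<Rightarrow> real"
  assumes "prob_space M" "f \<in> borel_measurable M" "\<And>x. x \<in> space M \<Longrightarrow> \<bar>f x\<bar> \<le> B"
  shows "integrable M f"
  using assms by (intro finite_measure.integrable_const_bound[where B = B] AE_I2)
    (auto simp: prob_space.finite_measure)

lemma integrable_mult_bounded:
  fixes f g :: "'a \<Rightarrow> real"
  assumes f: "integrable M f" and g: "g \<in> borel_measurable M"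
    and g_bound: "\<And>x. x \<in> space M \<Longrightarrow> \<bar>g x\<bar> \<le> B"
  shows "integrable M (\<lambda>x. f x * g x)"
proof (rule Bochner_Integration.integrable_bound[where f = "\<lambda>x. B * f x"])
  show "AE x in M. norm (f x * g x) \<le> norm (B * f x)"
  proof (intro AE_I2)
    fix x assume "x \<in> space M"
    then have "\<bar>f x\<bar> * \<bar>g x\<bar> \<le> \<bar>f x\<bar> * \<bar>B\<bar>"
      using g_bound[of x] by (intro mult_left_mono) auto
    then show "norm (f x * g x) \<le> norm (B * f x)" by (simp add: abs_mult mult.commute)
  qed
qed (use f g in auto)

lemma integral_exp_bounds:
  fixes f :: "'a \<Rightarrow> real"
  assumes M: "prob_space M" and f: "f \<in> borel_measurable M"
    and f_bound: "\<And>x. x \<in> space M \<Longrightarrow> \<bar>f x\<bar> \<le> B"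
  shows "integrable M (\<lambda>x. exp (f x))"
    and "exp (- B) \<le> (\<integral>x. exp (f x) \<partial>M)" and "(\<integral>x. exp (f x) \<partial>M) \<le> exp B"
proof -
  interpret prob_space M by fact
  have bounds: "- B \<le> f x" "f x \<le> B" if "x \<in> space M" for x
    using f_bound[OF that] by auto
  show int: "integrable M (\<lambda>x. exp (f x))"
    using f bounds by (intro integrable_bounded_on_space[OF M, where B = "exp B"]) auto
  have "(\<integral>x. exp (- B) \<partial>M) \<le> (\<integral>x. exp (f x) \<partial>M)"
    using int bounds by (intro integral_mono) auto
  then show "exp (- B) \<le> (\<integral>x. exp (f x) \<partial>M)" by (simp add: prob_space)
  have "(\<integral>x. exp (f x) \<partial>M) \<le> (\<integral>x. exp B \<partial>M)"
    using int bounds by (intro integral_mono) auto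
  then show "(\<integral>x. exp (f x) \<partial>M) \<le> exp B" by (simp add: prob_space)
qed

lemma integral_ln_le_ln_integral:
  fixes f :: "'a \<Rightarrow> real"
  assumes M: "prob_space M" and f: "integrable M f" and ln_f: "integrable M (\<lambda>x. ln (f x))"
    and f_pos: "\<And>x. x \<in> space M \<Longrightarrow> 0 < f x" and m_pos: "0 < (\<integral>x. f x \<partial>M)"
  shows "(\<integral>x. ln (f x) \<partial>M) \<le> ln (\<integral>x. f x \<partial>M)"
proof -
  interpret prob_space M by fact
  define m where "m = (\<integral>x. f x \<partial>M)"
  have "ln (f x) \<le> ln m + f x / m - 1" if "x \<in> space M" for x
    using ln_le_minus_one[of "f x / m"] f_pos[OF that] m_pos by (simp add: ln_div m_def)
  then have "(\<integral>x. ln (f x) \<partial>M) \<le> (\<integral>x. ln m + f x / m - 1 \<partial>M)"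
    using ln_f f by (intro integral_mono) auto
  also have "\<dots> = ln m" using f m_pos by (simp add: prob_space m_def)
  finally show ?thesis by (simp add: m_def)
qed

lemma density_real_RN_deriv:
  assumes P: "prob_space P" and Q: "prob_space Q" and sets_eq: "sets P = sets Q"
    and ac: "absolutely_continuous Q P"
  shows "P = density Q (\<lambda>x. ennreal (enn2real (RN_deriv Q P x)))"
proof -
  interpret Q: prob_space Q by fact
  interpret P: prob_space P by fact
  have "AE x in Q. RN_deriv Q P x \<noteq> \<infinity>"
    by (rule Q.RN_deriv_finite) (use ac sets_eq P.sigma_finite_measure_axioms in auto)
  then have "AE x in Q. RN_deriv Q P x = ennreal (enn2real (RN_deriv Q P x))"
    by eventually_elim (simp add: less_top ennreal_enn2real)
  then have "density Q (RN_deriv Q P) = density Q (\<lambda>x. ennreal (enn2real (RN_deriv Q P x)))"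
    by (intro density_cong) auto
  moreover have "density Q (RN_deriv Q P) = P"
    by (rule Q.density_RN_deriv) (use ac sets_eq in auto)
  ultimately show ?thesis by simp
qed

lemma integral_real_RN_deriv:
  assumes P: "prob_space P" and Q: "prob_space Q" and sets_eq: "sets P = sets Q"
    and ac: "absolutely_continuous Q P"
  shows "integrable Q (\<lambda>x. enn2real (RN_deriv Q P x))"
    and "(\<integral>x. enn2real (RN_deriv Q P x) \<partial>Q) = 1"
proof -
  interpret P: prob_space P by fact
  have "(\<integral>\<^sup>+x. ennreal (enn2real (RN_deriv Q P x)) \<partial>Q) = emeasure P (space P)"
    by (subst (2) density_real_RN_deriv[OF assms]) (simp add: emeasure_density sets_eq_imp_space_eq[OF sets_eq])
  then have "(\<integral>\<^sup>+x. ennreal (enn2real (RN_deriv Q P x)) \<partial>Q) = 1"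
    by (simp add: P.emeasure_space_1)
  then show "integrable Q (\<lambda>x. enn2real (RN_deriv Q P x))"
    and "(\<integral>x. enn2real (RN_deriv Q P x) \<partial>Q) = 1"
    by (auto intro!: integrableI_nonneg simp: integral_eq_nn_integral)
qed

lemma KL_div_eq_nn_integral:
  assumes "sets P = sets Q" "absolutely_continuous Q P"
  shows "KL_div P Q = (\<integral>\<^sup>+x. ennreal (enn2real (RN_deriv Q P x) * ln (enn2real (RN_deriv Q P x))
                         - enn2real (RN_deriv Q P x) + 1) \<partial>Q)"
  using assms by (simp add: KL_div_def Let_def)

lemma Donsker_Varadhan_le_KL_div:
  fixes g :: "'a \<Rightarrow> real"
  assumes P: "prob_space P" and Q: "prob_space Q" and sets_eq: "sets P = sets Q"
    and g: "g \<in> borel_measurable Q" and g_bound: "\<And>x. x \<in> space Q \<Longrightarrow> \<bar>g x\<bar> \<le> B"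
    and KL_fin: "KL_div P Q \<noteq> \<infinity>"
  shows "(\<integral>x. g x \<partial>P) - ln (\<integral>x. exp (g x) \<partial>Q) \<le> enn2real (KL_div P Q)"
proof -
  interpret Q: prob_space Q by fact
  have ac: "absolutely_continuous Q P" using KL_fin by (auto simp: KL_div_def split: if_splits)
  define f where "f x = enn2real (RN_deriv Q P x)" for x
  note f_int = integral_real_RN_deriv[OF P Q sets_eq ac, folded f_def]
  have f_meas: "f \<in> borel_measurable Q" unfolding f_def by measurable
  have f_nonneg: "\<And>x. 0 \<le> f x" by (simp add: f_def)
  define \<phi> where "\<phi> x = f x * ln (f x) - f x + 1" for x
  have KL_eq: "KL_div P Q = (\<integral>\<^sup>+x. ennreal (\<phi> x) \<partial>Q)"
    using KL_div_eq_nn_integral[OF sets_eq ac] by (simp add: \<phi>_def f_def)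
  have \<phi>_nonneg: "\<And>x. 0 \<le> \<phi> x" unfolding \<phi>_def by (intro entropy_integrand_nonneg f_nonneg)
  have \<phi>_meas: "\<phi> \<in> borel_measurable Q" unfolding \<phi>_def using f_meas by measurable
  have \<phi>_int: "integrable Q \<phi>"
    using KL_eq KL_fin \<phi>_nonneg \<phi>_meas by (intro integrableI_nonneg) (auto simp: less_top)
  have KL_real: "enn2real (KL_div P Q) = (\<integral>x. \<phi> x \<partial>Q)"
    using KL_eq \<phi>_int \<phi>_nonneg by (simp add: nn_integral_eq_integral)
  define m where "m = (\<integral>x. exp (g x) \<partial>Q)"
  note exp_g = integral_exp_bounds[OF Q g g_bound, folded m_def]
  have m_pos: "0 < m" using exp_g(2) exp_gt_zero[of "- B"] by linarith
  have fg_int: "integrable Q (\<lambda>x. f x * g x)" by (rule integrable_mult_bounded[OF f_int(1) g g_bound])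
  have g_P: "(\<integral>x. g x \<partial>P) = (\<integral>x. f x * g x \<partial>Q)"
    by (subst density_real_RN_deriv[OF P Q sets_eq ac, folded f_def])
       (use integral_density[OF g f_meas] f_nonneg in simp)
  have "f x * (g x - ln m) \<le> \<phi> x - 1 + exp (g x) / m" for x
    using mult_le_entropy_exp[OF f_nonneg, of x "g x - ln m"] m_pos by (simp add: \<phi>_def exp_diff)
  then have "(\<integral>x. f x * (g x - ln m) \<partial>Q) \<le> (\<integral>x. \<phi> x - 1 + exp (g x) / m \<partial>Q)"
    using fg_int f_int \<phi>_int exp_g by (intro integral_mono) (auto simp: right_diff_distrib)
  also have "\<dots> = (\<integral>x. \<phi> x \<partial>Q)"
    using \<phi>_int exp_g m_pos unfolding m_def by (simp add: Q.prob_space)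
  also have "(\<integral>x. f x * (g x - ln m) \<partial>Q) = (\<integral>x. g x \<partial>P) - ln m"
    using fg_int f_int g_P by (simp add: right_diff_distrib mult.commute)
  finally show ?thesis unfolding KL_real m_def .
qed

definition Donsker_Varadhan_le :: "'a measure \<Rightarrow> 'a measure \<Rightarrow> real \<Rightarrow> bool" where
  "Donsker_Varadhan_le P Q c \<longleftrightarrow>
     (\<forall>(g :: 'a \<Rightarrow> real) B. g \<in> borel_measurable Q \<longrightarrow> (\<forall>x \<in> space Q. \<bar>g x\<bar> \<le> B) \<longrightarrow>
        (\<integral>x. g x \<partial>P) - ln (\<integral>x. exp (g x) \<partial>Q) \<le> c)"

lemma Donsker_Varadhan_leD:
  assumes "Donsker_Varadhan_le P Q c" "g \<in> borel_measurable Q" "\<And>x. x \<in> space Q \<Longrightarrow> \<bar>g x\<bar> \<le> B"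
  shows "(\<integral>x. g x \<partial>P) - ln (\<integral>x. exp (g x) \<partial>Q) \<le> c"
  using assms unfolding Donsker_Varadhan_le_def by blast

lemma absolutely_continuous_of_Donsker_Varadhan:
  assumes P: "prob_space P" and Q: "prob_space Q" and sets_eq: "sets P = sets Q"
    and DV: "Donsker_Varadhan_le P Q c"
  shows "absolutely_continuous Q P"
proof (rule ccontr)
  interpret Q: prob_space Q by fact
  interpret P: prob_space P by fact
  assume "\<not> absolutely_continuous Q P"
  then obtain A where A: "A \<in> null_sets Q" "A \<notin> null_sets P"
    unfolding absolutely_continuous_def by auto
  have A_sets: "A \<in> sets Q" "A \<in> sets P" using A(1) sets_eq by auto
  have "measure P A \<noteq> 0" using A(2) A_sets(2) P.emeasure_eq_measure[of A] by (auto simp: null_sets_def)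
  then have PA: "0 < measure P A" using measure_nonneg[of P A] by linarith
  \<comment> \<open>as \<open>Q A = 0\<close>, the test function \<open>t \<cdot> 1\<^sub>A\<close> has \<open>\<integral>exp(\<dots>) dQ = 1\<close> but \<open>P\<close>-mean \<open>t \<cdot> P A\<close>\<close>
  define t where "t = (\<bar>c\<bar> + 1) / measure P A"
  define g where "g x = t * indicator A x" for x
  have t_nonneg: "0 \<le> t" unfolding t_def using PA by simp
  have "(\<integral>x. g x \<partial>P) = \<bar>c\<bar> + 1" unfolding g_def t_def using A_sets PA by simp
  moreover have "(\<lambda>x. exp (g x)) = (\<lambda>x. 1 + (exp t - 1) * indicator A x)"
    unfolding g_def by (auto simp: indicator_def fun_eq_iff)
  then have "(\<integral>x. exp (g x) \<partial>Q) = 1 + (exp t - 1) * measure Q A"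
    using A_sets by (simp add: Q.prob_space Q.emeasure_eq_measure less_top[symmetric])
  then have "(\<integral>x. exp (g x) \<partial>Q) = 1" using A(1) by (simp add: measure_eq_0_null_sets)
  moreover have "(\<integral>x. g x \<partial>P) - ln (\<integral>x. exp (g x) \<partial>Q) \<le> c"
  proof (rule Donsker_Varadhan_leD[OF DV])
    show "g \<in> borel_measurable Q" unfolding g_def using A_sets by measurable
    show "\<bar>g x\<bar> \<le> t" for x using t_nonneg by (simp add: g_def indicator_def)
  qed
  ultimately show False by simp
qed

text \<open>The optimal test function \<open>ln (dP/dQ)\<close> is unbounded; clamping \<open>dP/dQ\<close> to
  \<open>[1/(N+1), N+1]\<close> makes it admissible, and Fatou's lemma lets \<open>N \<rightarrow> \<infinity>\<close>.\<close>
definition clamp :: "nat \<Rightarrow> real \<Rightarrow> real" where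
  "clamp N y = max (1 / (real N + 1)) (min (real N + 1) y)"

lemma clamp_bounds: "1 / (real N + 1) \<le> clamp N y" "clamp N y \<le> real N + 1"
proof -
  have "1 / (real N + 1) \<le> 1" "1 \<le> real N + 1" by (auto simp: divide_simps)
  then have "1 / (real N + 1) \<le> real N + 1" by linarith
  then show "1 / (real N + 1) \<le> clamp N y" "clamp N y \<le> real N + 1"
    unfolding clamp_def by auto
qed

lemma clamp_pos: "0 < clamp N y"
  using clamp_bounds(1)[of N y] by (smt (verit) divide_pos_pos of_nat_0_le_iff)

lemma abs_ln_clamp_le: "\<bar>ln (clamp N y)\<bar> \<le> ln (real N + 1)"
proof -
  have "ln (1 / (real N + 1)) \<le> ln (clamp N y)" "ln (clamp N y) \<le> ln (real N + 1)"
    using clamp_bounds[of N y] clamp_pos[of N y] by (simp_all add: add_pos_nonneg)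
  then show ?thesis by (simp add: ln_div)
qed

lemma truncated_entropy_integrand_nonneg:
  fixes a :: real
  assumes a: "0 \<le> a"
  shows "0 \<le> a * ln (clamp N a) - clamp N a + 1"
proof -
  define t where "t = real N + 1"
  have t: "1 \<le> t" "1 / t \<le> 1" unfolding t_def by (auto simp: divide_simps)
  then have t: "1 \<le> t" "1 / t \<le> t" by linarith+
  consider "a \<le> 1 / t" | "t \<le> a" | "1 / t \<le> a" "a \<le> t" by linarith
  then show ?thesis
  proof cases
    case 1
    then have "clamp N a = 1 / t" using t unfolding clamp_def t_def[symmetric] by auto
    moreover have "a * ln t + 1 / t \<le> 1"
    proof -
      have "a * ln t \<le> (1 / t) * ln t" using 1 t by (intro mult_right_mono) auto
      moreover have "(1 + ln t) / t \<le> 1" using ln_le_minus_one[of t] t by (simp add: divide_simps)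
      ultimately show ?thesis by (simp add: add_divide_distrib)
    qed
    ultimately show ?thesis by (simp add: ln_div)
  next
    case 2
    then have "clamp N a = t" using t unfolding clamp_def t_def[symmetric] by auto
    moreover have "t * ln t \<le> a * ln t" using 2 t by (intro mult_right_mono) auto
    ultimately show ?thesis using entropy_integrand_nonneg[of t] t by simp
  next
    case 3
    then have "clamp N a = a" using t unfolding clamp_def t_def[symmetric] by auto
    then show ?thesis using entropy_integrand_nonneg[OF a] by simp
  qed
qed

lemma truncated_entropy_integrand_tendsto:
  fixes a :: real
  assumes "0 \<le> a"
  shows "(\<lambda>N. a * ln (clamp N a) - clamp N a + 1) \<longlonglongrightarrow> a * ln a - a + 1"
proof (cases "a = 0")
  case True
  have "(\<lambda>N. 1 / (real N + 1)) \<longlonglongrightarrow> 0"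
    using LIMSEQ_Suc[OF lim_1_over_n] by (simp add: add.commute)
  then have "(\<lambda>N. 1 - 1 / (real N + 1)) \<longlonglongrightarrow> 1 - 0" by (intro tendsto_intros)
  then show ?thesis using True by (simp add: clamp_def)
next
  case False
  then have a: "0 < a" using assms by simp
  obtain M :: nat where M: "max a (1 / a) \<le> real M" using real_arch_simple by blast
  have "clamp N a = a" if "M \<le> N" for N
  proof -
    have "a \<le> real N + 1" "1 / a \<le> real N + 1" using M that by auto
    then show ?thesis using a by (simp add: clamp_def divide_simps mult.commute)
  qed
  then have "\<forall>\<^sub>F N in sequentially. a * ln (clamp N a) - clamp N a + 1 = a * ln a - a + 1"
    by (auto intro: eventually_sequentiallyI[of M])
  then show ?thesis by (rule tendsto_eventually)
qed

lemma integral_truncated_entropy_le_Donsker_Varadhan: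
  assumes P: "prob_space P" and Q: "prob_space Q" and sets_eq: "sets P = sets Q"
    and ac: "absolutely_continuous Q P"
    and DV: "Donsker_Varadhan_le P Q c"
  defines "f \<equiv> \<lambda>x. enn2real (RN_deriv Q P x)"
  shows "integrable Q (\<lambda>x. f x * ln (clamp N (f x)) - clamp N (f x) + 1)"
    and "(\<integral>x. f x * ln (clamp N (f x)) - clamp N (f x) + 1 \<partial>Q) \<le> c"
proof -
  interpret Q: prob_space Q by fact
  note f_int = integral_real_RN_deriv[OF P Q sets_eq ac, folded f_def]
  have f_meas: "f \<in> borel_measurable Q" unfolding f_def by measurable
  have f_nonneg: "\<And>x. 0 \<le> f x" by (simp add: f_def)
  have u_meas: "(\<lambda>x. clamp N (f x)) \<in> borel_measurable Q"
    unfolding clamp_def using f_meas by measurable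
  have ln_u_meas: "(\<lambda>x. ln (clamp N (f x))) \<in> borel_measurable Q" using u_meas by measurable
  have u_int: "integrable Q (\<lambda>x. clamp N (f x))"
    using u_meas clamp_bounds clamp_pos
    by (intro integrable_bounded_on_space[OF Q, where B = "real N + 1"]) (auto simp: less_imp_le)
  have f_ln_u_int: "integrable Q (\<lambda>x. f x * ln (clamp N (f x)))"
    by (rule integrable_mult_bounded[OF f_int(1) ln_u_meas, where B = "ln (real N + 1)"])
       (simp add: abs_ln_clamp_le)
  show "integrable Q (\<lambda>x. f x * ln (clamp N (f x)) - clamp N (f x) + 1)"
    using f_ln_u_int u_int by simp
  define m where "m = (\<integral>x. clamp N (f x) \<partial>Q)"
  have "(\<integral>x. 1 / (real N + 1) \<partial>Q) \<le> m"
    unfolding m_def using u_int clamp_bounds(1) by (intro integral_mono) auto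
  then have "1 / (real N + 1) \<le> m" by (simp add: Q.prob_space)
  moreover have "0 < 1 / (real N + 1)" by (simp add: add_pos_nonneg)
  ultimately have m_pos: "0 < m" by linarith
  have "(\<integral>x. ln (clamp N (f x)) \<partial>P) = (\<integral>x. f x * ln (clamp N (f x)) \<partial>Q)"
  proof -
    have "P = density Q (\<lambda>x. ennreal (f x))"
      unfolding f_def by (rule density_real_RN_deriv[OF P Q sets_eq ac])
    then show ?thesis using integral_density[OF ln_u_meas f_meas] f_nonneg by simp
  qed
  moreover have "(\<integral>x. ln (clamp N (f x)) \<partial>P) - ln m \<le> c"
    using Donsker_Varadhan_leD[OF DV ln_u_meas abs_ln_clamp_le] clamp_pos by (simp add: m_def)
  moreover have "ln m \<le> m - 1" using m_pos by (rule ln_le_minus_one)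
  moreover have "(\<integral>x. f x * ln (clamp N (f x)) - clamp N (f x) + 1 \<partial>Q) =
      (\<integral>x. f x * ln (clamp N (f x)) \<partial>Q) - m + 1"
    using f_ln_u_int u_int by (simp add: Q.prob_space m_def)
  ultimately show "(\<integral>x. f x * ln (clamp N (f x)) - clamp N (f x) + 1 \<partial>Q) \<le> c"
    by simp
qed

lemma KL_div_le_of_Donsker_Varadhan:
  assumes P: "prob_space P" and Q: "prob_space Q" and sets_eq: "sets P = sets Q" and c: "0 \<le> c"
    and DV: "Donsker_Varadhan_le P Q c"
  shows "KL_div P Q \<le> ennreal c"
proof -
  have ac: "absolutely_continuous Q P"
    by (rule absolutely_continuous_of_Donsker_Varadhan[OF P Q sets_eq DV])
  define f where "f x = enn2real (RN_deriv Q P x)" for x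
  have f_meas: "f \<in> borel_measurable Q" unfolding f_def by measurable
  have f_nonneg: "\<And>x. 0 \<le> f x" by (simp add: f_def)
  define \<psi> where "\<psi> N = (\<lambda>x. f x * ln (clamp N (f x)) - clamp N (f x) + 1)" for N
  note \<psi>_bound = integral_truncated_entropy_le_Donsker_Varadhan[OF P Q sets_eq ac DV, folded f_def]
  have \<psi>_nonneg: "0 \<le> \<psi> N x" for N x
    unfolding \<psi>_def by (rule truncated_entropy_integrand_nonneg[OF f_nonneg])
  have \<psi>_meas: "\<psi> N \<in> borel_measurable Q" for N
    unfolding \<psi>_def clamp_def using f_meas by measurable
  have "KL_div P Q = (\<integral>\<^sup>+x. ennreal (f x * ln (f x) - f x + 1) \<partial>Q)"
    using KL_div_eq_nn_integral[OF sets_eq ac] by (simp add: f_def)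
  also have "\<dots> = (\<integral>\<^sup>+x. liminf (\<lambda>N. ennreal (\<psi> N x)) \<partial>Q)"
    unfolding \<psi>_def
    by (intro nn_integral_cong lim_imp_Liminf[symmetric] tendsto_ennrealI
        truncated_entropy_integrand_tendsto f_nonneg) simp
  also have "\<dots> \<le> liminf (\<lambda>N. \<integral>\<^sup>+x. ennreal (\<psi> N x) \<partial>Q)"
    using \<psi>_meas by (intro nn_integral_liminf) measurable
  also have "\<dots> \<le> limsup (\<lambda>N. \<integral>\<^sup>+x. ennreal (\<psi> N x) \<partial>Q)"
    by (rule Liminf_le_Limsup) simp
  also have "\<dots> \<le> ennreal c"
  proof (rule Limsup_bounded, intro always_eventually allI)
    fix N
    have "(\<integral>\<^sup>+x. ennreal (\<psi> N x) \<partial>Q) = ennreal (\<integral>x. \<psi> N x \<partial>Q)"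
      using \<psi>_bound(1)[of N] \<psi>_nonneg by (intro nn_integral_eq_integral) (auto simp: \<psi>_def)
    then show "(\<integral>\<^sup>+x. ennreal (\<psi> N x) \<partial>Q) \<le> ennreal c"
      using \<psi>_bound(2)[of N] by (simp add: ennreal_leI \<psi>_def)
  qed
  finally show ?thesis .
qed

lemma kernel_measurable_joint_law:
  assumes "K \<in> M \<rightarrow>\<^sub>M prob_algebra MW"
  shows "(\<lambda>x. distr (K x) (M \<Otimes>\<^sub>M MW) (\<lambda>w. (x, w))) \<in> M \<rightarrow>\<^sub>M prob_algebra (M \<Otimes>\<^sub>M MW)"
  by (rule measurable_distr_prob_space2[OF assms]) simp

lemma
  assumes M: "prob_space M" and K: "K \<in> M \<rightarrow>\<^sub>M prob_algebra MW"
  shows sets_joint_law: "sets (joint_law M K MW) = sets (M \<Otimes>\<^sub>M MW)"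
    and prob_space_joint_law: "prob_space (joint_law M K MW)"
  using sets_bind'[OF _ kernel_measurable_joint_law[OF K]]
    prob_space_bind'[OF _ kernel_measurable_joint_law[OF K]] M
  by (auto simp: joint_law_def space_prob_algebra)

lemma sets_kernel:
  assumes "K \<in> M \<rightarrow>\<^sub>M prob_algebra MW" "x \<in> space M"
  shows "sets (K x) = sets MW"
  using measurable_space[OF assms] by (simp add: space_prob_algebra)

lemma nn_integral_joint_law:
  assumes M: "prob_space M" and K: "K \<in> M \<rightarrow>\<^sub>M prob_algebra MW"
    and h: "h \<in> borel_measurable (M \<Otimes>\<^sub>M MW)"
  shows "(\<integral>\<^sup>+p. h p \<partial>joint_law M K MW) = (\<integral>\<^sup>+x. \<integral>\<^sup>+w. h (x, w) \<partial>K x \<partial>M)"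
proof -
  have "(\<integral>\<^sup>+p. h p \<partial>joint_law M K MW) =
      (\<integral>\<^sup>+x. \<integral>\<^sup>+p. h p \<partial>distr (K x) (M \<Otimes>\<^sub>M MW) (\<lambda>w. (x, w)) \<partial>M)"
    unfolding joint_law_def
    by (rule nn_integral_bind[OF h measurable_prob_algebraD[OF kernel_measurable_joint_law[OF K]]])
  also have "\<dots> = (\<integral>\<^sup>+x. \<integral>\<^sup>+w. h (x, w) \<partial>K x \<partial>M)"
  proof (rule nn_integral_cong)
    fix x assume x: "x \<in> space M"
    have "(\<lambda>w. (x, w)) \<in> K x \<rightarrow>\<^sub>M M \<Otimes>\<^sub>M MW"
      using x by (simp add: measurable_cong_sets[OF sets_kernel[OF K x] refl])
    then show "(\<integral>\<^sup>+p. h p \<partial>distr (K x) (M \<Otimes>\<^sub>M MW) (\<lambda>w. (x, w))) = (\<integral>\<^sup>+w. h (x, w) \<partial>K x)"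
      using h by (subst nn_integral_distr) auto
  qed
  finally show ?thesis .
qed

lemma distr_joint_law_fst:
  assumes M: "prob_space M" and K: "K \<in> M \<rightarrow>\<^sub>M prob_algebra MW"
  shows "distr (joint_law M K MW) M fst = M"
proof (rule measure_eqI)
  fix A assume "A \<in> sets (distr (joint_law M K MW) M fst)"
  then have A: "A \<in> sets M" by simp
  have "fst \<in> joint_law M K MW \<rightarrow>\<^sub>M M"
    by (simp add: measurable_cong_sets[OF sets_joint_law[OF M K] refl])
  then have "emeasure (distr (joint_law M K MW) M fst) A = (\<integral>\<^sup>+p. indicator A (fst p) \<partial>joint_law M K MW)"
    using A by (simp add: nn_integral_indicator[symmetric] nn_integral_distr del: nn_integral_indicator)
  also have "\<dots> = (\<integral>\<^sup>+x. \<integral>\<^sup>+w. indicator A x \<partial>K x \<partial>M)"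
    using A by (subst nn_integral_joint_law[OF M K]) auto
  also have "\<dots> = (\<integral>\<^sup>+x. indicator A x \<partial>M)"
  proof (rule nn_integral_cong)
    fix x assume "x \<in> space M"
    then interpret prob_space "K x"
      using measurable_space[OF K] by (simp add: space_prob_algebra)
    show "(\<integral>\<^sup>+w. indicator A x \<partial>K x) = indicator A x" by (simp add: emeasure_space_1)
  qed
  finally show "emeasure (distr (joint_law M K MW) M fst) A = emeasure M A" using A by simp
qed simp

lemma integral_INF_le_integral_joint_law:
  fixes f :: "'w \<Rightarrow> 'a \<Rightarrow> real"
  assumes M: "prob_space M" and K: "K \<in> M \<rightarrow>\<^sub>M prob_algebra MW"
    and bdd: "\<And>x. x \<in> space M \<Longrightarrow> bdd_below ((\<lambda>w. f w x) ` space MW)"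
    and inf_int: "integrable M (\<lambda>x. INF w \<in> space MW. f w x)"
    and f_int: "integrable (joint_law M K MW) (\<lambda>(x, w). f w x)"
  shows "(\<integral>x. (INF w \<in> space MW. f w x) \<partial>M) \<le> (\<integral>(x, w). f w x \<partial>joint_law M K MW)"
proof -
  define I where "I = (\<lambda>x. INF w \<in> space MW. f w x)"
  have fst: "fst \<in> joint_law M K MW \<rightarrow>\<^sub>M M"
    by (simp add: measurable_cong_sets[OF sets_joint_law[OF M K] refl])
  have I_meas: "I \<in> borel_measurable M" using inf_int unfolding I_def by simp
  have "(\<integral>x. I x \<partial>M) = (\<integral>p. I (fst p) \<partial>joint_law M K MW)"
    using integral_distr[OF fst I_meas] by (simp add: distr_joint_law_fst[OF M K])
  also have "\<dots> \<le> (\<integral>(x, w). f w x \<partial>joint_law M K MW)"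
  proof (rule integral_mono[OF _ f_int])
    show "integrable (joint_law M K MW) (\<lambda>p. I (fst p))"
      using inf_int integrable_distr_eq[OF fst I_meas] by (simp add: distr_joint_law_fst[OF M K] I_def)
    fix p assume "p \<in> space (joint_law M K MW)"
    then have "fst p \<in> space M" "snd p \<in> space MW"
      by (auto simp: sets_eq_imp_space_eq[OF sets_joint_law[OF M K]] space_pair_measure)
    then show "I (fst p) \<le> (\<lambda>(x, w). f w x) p"
      unfolding I_def by (auto intro: cINF_lower[OF bdd] simp: case_prod_beta)
  qed
  finally show ?thesis by (simp add: I_def)
qed

lemma nn_integral_PiM_resample:
  fixes n :: nat
  assumes \<mu>: "prob_space \<mu>" and i: "i < n"
    and F: "F \<in> borel_measurable (PiM {..<n} (\<lambda>_. \<mu>))"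
  shows "(\<integral>\<^sup>+z. \<integral>\<^sup>+s. F (s(i := z)) \<partial>PiM {..<n} (\<lambda>_. \<mu>) \<partial>\<mu>) = (\<integral>\<^sup>+s. F s \<partial>PiM {..<n} (\<lambda>_. \<mu>))"
proof -
  interpret \<mu>: prob_space \<mu> by fact
  interpret product_prob_space "\<lambda>_. \<mu>"
    by (simp add: product_prob_space_def product_sigma_finite_def product_prob_space_axioms_def \<mu>
        \<mu>.sigma_finite_measure_axioms)
  define I where "I = {..<n} - {i}"
  have I: "finite I" "i \<notin> I" "insert i I = {..<n}" using i unfolding I_def by auto
  have F': "F \<in> borel_measurable (PiM (insert i I) (\<lambda>_. \<mu>))" using F I(3) by simp
  have "(\<integral>\<^sup>+s. F (s(i := z)) \<partial>PiM (insert i I) (\<lambda>_. \<mu>)) = (\<integral>\<^sup>+x. F (x(i := z)) \<partial>PiM I (\<lambda>_. \<mu>))"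
    if z: "z \<in> space \<mu>" for z
  proof -
    have "(\<lambda>s. s(i := z)) \<in> PiM (insert i I) (\<lambda>_. \<mu>) \<rightarrow>\<^sub>M PiM (insert i I) (\<lambda>_. \<mu>)"
      by (rule measurable_fun_upd[where J = "insert i I"]) (use z in auto)
    then have "(\<lambda>s. F (s(i := z))) \<in> borel_measurable (PiM (insert i I) (\<lambda>_. \<mu>))"
      using F' by measurable
    then show ?thesis
      by (subst product_nn_integral_insert[OF I(1,2)]) (simp_all add: \<mu>.emeasure_space_1)
  qed
  then have "(\<integral>\<^sup>+z. \<integral>\<^sup>+s. F (s(i := z)) \<partial>PiM {..<n} (\<lambda>_. \<mu>) \<partial>\<mu>) =
      (\<integral>\<^sup>+z. \<integral>\<^sup>+x. F (x(i := z)) \<partial>PiM I (\<lambda>_. \<mu>) \<partial>\<mu>)"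
    using I(3) by (intro nn_integral_cong) simp
  also have "\<dots> = (\<integral>\<^sup>+s. F s \<partial>PiM (insert i I) (\<lambda>_. \<mu>))"
    by (rule product_nn_integral_insert_rev[OF I(1,2) F', symmetric])
  finally show ?thesis using I(3) by simp
qed

lemma integrable_prod_coordinates:
  fixes \<phi> :: "'z \<Rightarrow> 'w \<Rightarrow> real" and n :: nat
  assumes \<mu>: "prob_space \<mu>" and M: "prob_space M"
    and \<phi>: "(\<lambda>(z, w). \<phi> z w) \<in> borel_measurable (\<mu> \<Otimes>\<^sub>M M)"
    and \<phi>_bound: "\<And>z w. z \<in> space \<mu> \<Longrightarrow> w \<in> space M \<Longrightarrow> \<bar>\<phi> z w\<bar> \<le> C"
  shows "integrable (PiM {..<n} (\<lambda>_. \<mu>) \<Otimes>\<^sub>M M) (\<lambda>(s, w). \<Prod>i<n. \<phi> (s i) w)"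
proof -
  have S: "prob_space (PiM {..<n} (\<lambda>_. \<mu>))" by (intro prob_space_PiM) (use \<mu> in auto)
  have meas: "(\<lambda>(s, w). \<Prod>i<n. \<phi> (s i) w) \<in> borel_measurable (PiM {..<n} (\<lambda>_. \<mu>) \<Otimes>\<^sub>M M)"
  proof -
    have "(\<lambda>p. \<phi> (fst p i) (snd p)) \<in> borel_measurable (PiM {..<n} (\<lambda>_. \<mu>) \<Otimes>\<^sub>M M)" if "i < n" for i
      using measurable_compose[of "\<lambda>p. (fst p i, snd p)", OF _ \<phi>] that by (simp add: comp_def)
    then show ?thesis by (simp add: case_prod_beta)
  qed
  have "\<bar>\<Prod>i<n. \<phi> (s i) w\<bar> \<le> C ^ n"
    if "s \<in> space (PiM {..<n} (\<lambda>_. \<mu>))" "w \<in> space M" for s w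
  proof -
    have "(\<Prod>i<n. \<bar>\<phi> (s i) w\<bar>) \<le> (\<Prod>i<n. C)"
      using that \<phi>_bound by (intro prod_mono) (auto simp: space_PiM)
    then show ?thesis by (simp add: abs_prod)
  qed
  then show ?thesis
    using meas by (intro integrable_bounded_on_space[OF prob_space_pair[OF S M], where B = "C ^ n"])
      (auto simp: space_pair_measure)
qed

lemma integral_prod_normalized_eq_1:
  fixes \<phi> :: "'z \<Rightarrow> 'w \<Rightarrow> real" and n :: nat
  assumes \<mu>: "prob_space \<mu>" and M: "prob_space M"
    and \<phi>: "(\<lambda>(z, w). \<phi> z w) \<in> borel_measurable (\<mu> \<Otimes>\<^sub>M M)"
    and \<phi>_bound: "\<And>z w. z \<in> space \<mu> \<Longrightarrow> w \<in> space M \<Longrightarrow> \<bar>\<phi> z w\<bar> \<le> C"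
    and \<phi>_normalized: "\<And>w. w \<in> space M \<Longrightarrow> (\<integral>z. \<phi> z w \<partial>\<mu>) = 1"
  shows "(\<integral>p. (\<Prod>i<n. \<phi> (fst p i) (snd p)) \<partial>(PiM {..<n} (\<lambda>_. \<mu>) \<Otimes>\<^sub>M M)) = 1"
proof -
  interpret \<mu>: prob_space \<mu> by fact
  interpret M: prob_space M by fact
  interpret P: product_prob_space "\<lambda>_. \<mu>"
    by (simp add: product_prob_space_def product_sigma_finite_def product_prob_space_axioms_def \<mu>
        \<mu>.sigma_finite_measure_axioms)
  have S: "prob_space (PiM {..<n} (\<lambda>_. \<mu>))" by (intro prob_space_PiM) (use \<mu> in auto)
  interpret S: prob_space "PiM {..<n} (\<lambda>_. \<mu>)" by fact
  interpret SM: pair_sigma_finite "PiM {..<n} (\<lambda>_. \<mu>)" M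
    by (simp add: pair_sigma_finite_def S.sigma_finite_measure_axioms M.sigma_finite_measure_axioms)
  have int: "integrable (PiM {..<n} (\<lambda>_. \<mu>) \<Otimes>\<^sub>M M) (\<lambda>(s, w). \<Prod>i<n. \<phi> (s i) w)"
    by (rule integrable_prod_coordinates[OF \<mu> M \<phi> \<phi>_bound])
  have "(\<integral>p. (\<Prod>i<n. \<phi> (fst p i) (snd p)) \<partial>(PiM {..<n} (\<lambda>_. \<mu>) \<Otimes>\<^sub>M M)) =
      (\<integral>w. (\<integral>s. (\<Prod>i<n. \<phi> (s i) w) \<partial>PiM {..<n} (\<lambda>_. \<mu>)) \<partial>M)"
  proof -
    have "(\<lambda>p. \<Prod>i<n. \<phi> (fst p i) (snd p)) = (\<lambda>(s, w). \<Prod>i<n. \<phi> (s i) w)" by auto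
    then show ?thesis using SM.integral_snd[OF int] by simp
  qed
  also have "\<dots> = (\<integral>w. 1 \<partial>M)"
  proof (rule Bochner_Integration.integral_cong[OF refl])
    fix w assume w: "w \<in> space M"
    have \<phi>_w: "(\<lambda>z. \<phi> z w) \<in> borel_measurable \<mu>" using measurable_Pair1[OF \<phi> w] by simp
    have "(\<integral>s. (\<Prod>i<n. \<phi> (s i) w) \<partial>PiM {..<n} (\<lambda>_. \<mu>)) = (\<Prod>i<n. \<integral>z. \<phi> z w \<partial>\<mu>)"
      using \<phi>_bound w by (intro P.product_integral_prod integrable_bounded_on_space[OF \<mu> \<phi>_w]) auto
    then show "(\<integral>s. (\<Prod>i<n. \<phi> (s i) w) \<partial>PiM {..<n} (\<lambda>_. \<mu>)) = 1" using \<phi>_normalized[OF w] by simp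
  qed
  finally show ?thesis by (simp add: M.prob_space)
qed

lemma emp_risk_const_minus:
  assumes "0 < n"
  shows "emp_risk n (\<lambda>w z. c w - l w z) w s = c w - emp_risk n l w s"
  using assms by (simp add: emp_risk_def sum_subtractf diff_divide_distrib)

definition partition_fun :: "'z measure \<Rightarrow> ('z \<times> 'w \<Rightarrow> real) \<Rightarrow> 'w \<Rightarrow> real" where
  "partition_fun \<mu> g w = (\<integral>z. exp (g (z, w)) \<partial>\<mu>)"

context
  fixes \<mu> :: "'z measure" and M :: "'w measure" and g :: "'z \<times> 'w \<Rightarrow> real" and B :: real
  assumes \<mu>: "prob_space \<mu>" and M: "prob_space M"
    and g: "g \<in> borel_measurable (\<mu> \<Otimes>\<^sub>M M)"
    and g_bound: "\<And>x. x \<in> space (\<mu> \<Otimes>\<^sub>M M) \<Longrightarrow> \<bar>g x\<bar> \<le> B"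
begin

lemma partition_fun_measurable: "partition_fun \<mu> g \<in> borel_measurable M"
proof -
  interpret \<mu>: prob_space \<mu> by (rule \<mu>)
  interpret M: prob_space M by (rule M)
  show ?thesis unfolding partition_fun_def[abs_def] using g by measurable
qed

lemma partition_fun_bounds:
  assumes "w \<in> space M"
  shows "exp (- B) \<le> partition_fun \<mu> g w" and "partition_fun \<mu> g w \<le> exp B"
  using integral_exp_bounds(2,3)[OF \<mu> measurable_Pair1[OF g assms], of B] g_bound assms
  by (simp_all add: partition_fun_def space_pair_measure)

lemma partition_fun_pos: "w \<in> space M \<Longrightarrow> 0 < partition_fun \<mu> g w"
  using partition_fun_bounds(1)[of w] exp_gt_zero[of "- B"] by linarith

lemma abs_ln_partition_fun_le: "w \<in> space M \<Longrightarrow> \<bar>ln (partition_fun \<mu> g w)\<bar> \<le> B"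
  using partition_fun_bounds[of w] partition_fun_pos[of w]
    ln_le_cancel_iff[of "exp (- B)" "partition_fun \<mu> g w"] ln_le_cancel_iff[of "partition_fun \<mu> g w" "exp B"]
  by (simp add: abs_le_iff)

lemma integral_partition_fun: "(\<integral>w. partition_fun \<mu> g w \<partial>M) = (\<integral>x. exp (g x) \<partial>(\<mu> \<Otimes>\<^sub>M M))"
proof -
  interpret \<mu>: prob_space \<mu> by (rule \<mu>)
  interpret M: prob_space M by (rule M)
  interpret pair_sigma_finite \<mu> M
    by (simp add: pair_sigma_finite_def \<mu>.sigma_finite_measure_axioms M.sigma_finite_measure_axioms)
  have "integrable (\<mu> \<Otimes>\<^sub>M M) (\<lambda>x. exp (g x))"
    using integral_exp_bounds(1)[OF prob_space_pair[OF \<mu> M] g, of B] g_bound by simp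
  then show ?thesis
    using integral_snd[of "\<lambda>z w. exp (g (z, w))"] by (simp add: partition_fun_def split_beta')
qed

lemma integral_ln_partition_fun_le:
  "(\<integral>w. ln (partition_fun \<mu> g w) \<partial>M) \<le> ln (\<integral>x. exp (g x) \<partial>(\<mu> \<Otimes>\<^sub>M M))"
proof -
  interpret M: prob_space M by (rule M)
  have Z_int: "integrable M (partition_fun \<mu> g)"
    using partition_fun_measurable partition_fun_bounds(2) partition_fun_pos
    by (intro integrable_bounded_on_space[OF M, where B = "exp B"]) (auto simp: abs_of_pos)
  have "integrable M (\<lambda>w. ln (partition_fun \<mu> g w))"
    using abs_ln_partition_fun_le partition_fun_measurable
    by (intro integrable_bounded_on_space[OF M, where B = B]) auto
  moreover have "(\<integral>w. exp (- B) \<partial>M) \<le> (\<integral>w. partition_fun \<mu> g w \<partial>M)"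
    using Z_int partition_fun_bounds(1) by (intro integral_mono) auto
  then have "0 < (\<integral>w. partition_fun \<mu> g w \<partial>M)"
    using M.prob_space exp_gt_zero[of "- B"] by (simp del: exp_gt_zero)
  ultimately show ?thesis
    using integral_ln_le_ln_integral[OF M Z_int] partition_fun_pos integral_partition_fun by simp
qed

lemma measurable_sum_minus_ln_partition_fun:
  fixes n :: nat
  shows "(\<lambda>p. \<Sum>i<n. g (fst p i, snd p) - ln (partition_fun \<mu> g (snd p)))
           \<in> borel_measurable (PiM {..<n} (\<lambda>_. \<mu>) \<Otimes>\<^sub>M M)"
proof -
  have "(\<lambda>p. g (fst p i, snd p)) \<in> borel_measurable (PiM {..<n} (\<lambda>_. \<mu>) \<Otimes>\<^sub>M M)" if "i < n" for i
    using measurable_compose[of "\<lambda>p. (fst p i, snd p)", OF _ g] that by (simp add: comp_def)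
  moreover have "(\<lambda>p. ln (partition_fun \<mu> g (snd p))) \<in> borel_measurable (PiM {..<n} (\<lambda>_. \<mu>) \<Otimes>\<^sub>M M)"
    using partition_fun_measurable by measurable
  ultimately show ?thesis by (intro borel_measurable_sum borel_measurable_diff) simp_all
qed

lemma abs_sum_minus_ln_partition_fun_le:
  fixes n :: nat
  assumes p: "p \<in> space (PiM {..<n} (\<lambda>_. \<mu>) \<Otimes>\<^sub>M M)"
  shows "\<bar>\<Sum>i<n. g (fst p i, snd p) - ln (partition_fun \<mu> g (snd p))\<bar> \<le> real n * (2 * B)"
proof -
  have s: "fst p \<in> space (PiM {..<n} (\<lambda>_. \<mu>))" and w: "snd p \<in> space M"
    using p by (simp_all add: space_pair_measure mem_Times_iff)
  have "\<bar>\<Sum>i<n. g (fst p i, snd p) - ln (partition_fun \<mu> g (snd p))\<bar>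
      \<le> (\<Sum>i<n. \<bar>g (fst p i, snd p) - ln (partition_fun \<mu> g (snd p))\<bar>)"
    by (rule sum_abs)
  also have "\<dots> \<le> (\<Sum>i<n. 2 * B)"
  proof (rule sum_mono)
    fix i assume "i \<in> {..<n}"
    then have "fst p i \<in> space \<mu>" using s by (auto simp: space_PiM)
    then have "\<bar>g (fst p i, snd p)\<bar> \<le> B" using g_bound w by (simp add: space_pair_measure)
    moreover have "\<bar>ln (partition_fun \<mu> g (snd p))\<bar> \<le> B" by (rule abs_ln_partition_fun_le[OF w])
    ultimately show "\<bar>g (fst p i, snd p) - ln (partition_fun \<mu> g (snd p))\<bar> \<le> 2 * B" by linarith
  qed
  finally show ?thesis by simp
qed

lemma integral_exp_sum_minus_ln_partition_fun:
  fixes n :: nat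
  shows "(\<integral>p. exp (\<Sum>i<n. g (fst p i, snd p) - ln (partition_fun \<mu> g (snd p)))
           \<partial>(PiM {..<n} (\<lambda>_. \<mu>) \<Otimes>\<^sub>M M)) = 1"
proof -
  have "(\<integral>p. exp (\<Sum>i<n. g (fst p i, snd p) - ln (partition_fun \<mu> g (snd p))) \<partial>(PiM {..<n} (\<lambda>_. \<mu>) \<Otimes>\<^sub>M M)) =
      (\<integral>p. (\<Prod>i<n. exp (g (fst p i, snd p)) / partition_fun \<mu> g (snd p)) \<partial>(PiM {..<n} (\<lambda>_. \<mu>) \<Otimes>\<^sub>M M))"
  proof (rule Bochner_Integration.integral_cong[OF refl])
    fix p assume "p \<in> space (PiM {..<n} (\<lambda>_. \<mu>) \<Otimes>\<^sub>M M)"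
    then have "0 < partition_fun \<mu> g (snd p)" by (intro partition_fun_pos) (auto simp: space_pair_measure)
    then show "exp (\<Sum>i<n. g (fst p i, snd p) - ln (partition_fun \<mu> g (snd p))) =
        (\<Prod>i<n. exp (g (fst p i, snd p)) / partition_fun \<mu> g (snd p))"
      by (simp add: exp_sum exp_diff)
  qed
  also have "\<dots> = 1"
  proof (rule integral_prod_normalized_eq_1[OF \<mu> M])
    show "(\<lambda>(z, w). exp (g (z, w)) / partition_fun \<mu> g w) \<in> borel_measurable (\<mu> \<Otimes>\<^sub>M M)"
      using g partition_fun_measurable by measurable
    show "\<bar>exp (g (z, w)) / partition_fun \<mu> g w\<bar> \<le> exp B / exp (- B)"
      if "z \<in> space \<mu>" "w \<in> space M" for z w
    proof -
      have "exp (g (z, w)) \<le> exp B" using g_bound[of "(z, w)"] that by (simp add: space_pair_measure)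
      moreover have "exp (- B) \<le> partition_fun \<mu> g w" by (rule partition_fun_bounds(1)[OF that(2)])
      ultimately have "exp (g (z, w)) / partition_fun \<mu> g w \<le> exp B / exp (- B)"
        by (intro frac_le) auto
      then show ?thesis using partition_fun_pos[OF that(2)] by simp
    qed
    show "(\<integral>z. exp (g (z, w)) / partition_fun \<mu> g w \<partial>\<mu>) = 1" if "w \<in> space M" for w
      using partition_fun_pos[OF that] by (simp add: partition_fun_def)
  qed
  finally show ?thesis .
qed

end

locale symmetrized_kernel =
  fixes \<mu>' :: "'z measure" and MW :: "'w measure" and n :: nat
    and K :: "(nat \<Rightarrow> 'z) \<Rightarrow> 'w measure"
  assumes prob_space_\<mu>': "prob_space \<mu>'" and n_pos: "1 \<le> n"
    and K: "K \<in> PiM {..<n} (\<lambda>_. \<mu>') \<rightarrow>\<^sub>M prob_algebra MW"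
begin

abbreviation "Sn \<equiv> PiM {..<n} (\<lambda>_. \<mu>')"

text \<open>\<open>i mod n\<close> makes \<open>planted_kernel i\<close> a kernel for every \<open>i :: nat\<close>, so the mixture over
  the uniform index is measurable without a case split on \<open>i < n\<close>.\<close>
definition planted_kernel :: "nat \<Rightarrow> 'z \<Rightarrow> 'w measure" where
  "planted_kernel i z = Sn \<bind> (\<lambda>s. K (s(i mod n := z)))"

definition sym_kernel :: "'z \<Rightarrow> 'w measure" where
  "sym_kernel z = measure_pmf (pmf_of_set {..<n}) \<bind> (\<lambda>i. planted_kernel i z)"

abbreviation "J \<equiv> joint_law Sn K MW"
abbreviation "J_sym \<equiv> joint_law \<mu>' sym_kernel MW"
abbreviation "W_law \<equiv> distr J MW snd"

lemma prob_space_Sn: "prob_space Sn"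
  by (intro prob_space_PiM) (use prob_space_\<mu>' in auto)

lemma measurable_planted:
  assumes "z \<in> space \<mu>'"
  shows "(\<lambda>s. K (s(i mod n := z))) \<in> Sn \<rightarrow>\<^sub>M prob_algebra MW"
proof (rule measurable_compose[OF _ K])
  show "(\<lambda>s. s(i mod n := z)) \<in> Sn \<rightarrow>\<^sub>M Sn"
    by (rule measurable_fun_upd[where J = "{..<n}"]) (use assms n_pos in auto)
qed

lemma planted_kernel_measurable: "planted_kernel i \<in> \<mu>' \<rightarrow>\<^sub>M prob_algebra MW"
proof -
  have "(\<lambda>p. (snd p)(i mod n := fst p)) \<in> \<mu>' \<Otimes>\<^sub>M Sn \<rightarrow>\<^sub>M Sn"
    by (rule measurable_fun_upd[where J = "{..<n}"]) (use n_pos in auto)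
  from measurable_compose[OF this K]
  have "(\<lambda>(z, s). K (s(i mod n := z))) \<in> \<mu>' \<Otimes>\<^sub>M Sn \<rightarrow>\<^sub>M prob_algebra MW"
    by (simp add: case_prod_beta)
  then show ?thesis unfolding planted_kernel_def
    by (intro measurable_bind_prob_space2[OF measurable_const]) (simp_all add: space_prob_algebra prob_space_Sn)
qed

lemma sym_kernel_measurable: "sym_kernel \<in> \<mu>' \<rightarrow>\<^sub>M prob_algebra MW"
proof -
  have "(\<lambda>p. planted_kernel (snd p) (fst p)) \<in> \<mu>' \<Otimes>\<^sub>M count_space UNIV \<rightarrow>\<^sub>M prob_algebra MW"
    by (rule measurable_compose_countable[where f = "\<lambda>i p. planted_kernel i (fst p)"])
       (auto intro: measurable_compose[OF measurable_fst planted_kernel_measurable])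
  then have "(\<lambda>(z, i). planted_kernel i z) \<in> \<mu>' \<Otimes>\<^sub>M count_space UNIV \<rightarrow>\<^sub>M prob_algebra MW"
    by (simp add: case_prod_beta)
  moreover have "measure_pmf (pmf_of_set {..<n}) \<in> space (prob_algebra (count_space UNIV))"
    by (simp add: space_prob_algebra measure_pmf.prob_space_axioms)
  ultimately show ?thesis unfolding sym_kernel_def
    by (intro measurable_bind_prob_space2[OF measurable_const]) simp_all
qed

lemma nn_integral_sym_kernel:
  assumes z: "z \<in> space \<mu>'" and h: "h \<in> borel_measurable MW"
  shows "(\<integral>\<^sup>+w. h w \<partial>sym_kernel z) = (\<Sum>i<n. \<integral>\<^sup>+w. h w \<partial>planted_kernel i z) / of_nat n"
proof -
  have "(\<lambda>i. planted_kernel i z) \<in> count_space UNIV \<rightarrow>\<^sub>M subprob_algebra MW"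
    using measurable_space[OF measurable_prob_algebraD[OF planted_kernel_measurable] z] by auto
  then have "(\<integral>\<^sup>+w. h w \<partial>sym_kernel z) =
      (\<integral>\<^sup>+i. \<integral>\<^sup>+w. h w \<partial>planted_kernel i z \<partial>measure_pmf (pmf_of_set {..<n}))"
    unfolding sym_kernel_def
    by (intro nn_integral_bind[OF h]) (simp add: measurable_cong_sets[OF sets_measure_pmf_count_space refl])
  also have "\<dots> = (\<Sum>i<n. \<integral>\<^sup>+w. h w \<partial>planted_kernel i z) / of_nat n"
    using n_pos by (subst nn_integral_pmf_of_set) (auto simp: lessThan_empty_iff)
  finally show ?thesis .
qed

lemma nn_integral_planted_kernel:
  assumes h: "h \<in> borel_measurable (\<mu>' \<Otimes>\<^sub>M MW)" and i: "i < n"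
  shows "(\<integral>\<^sup>+z. \<integral>\<^sup>+w. h (z, w) \<partial>planted_kernel i z \<partial>\<mu>') = (\<integral>\<^sup>+p. h (fst p i, snd p) \<partial>J)"
proof -
  define F where "F t = (\<integral>\<^sup>+w. h (t i, w) \<partial>K t)" for t
  have h_i: "(\<lambda>p. h (fst p i, snd p)) \<in> borel_measurable (Sn \<Otimes>\<^sub>M MW)"
    using measurable_compose[of "\<lambda>p. (fst p i, snd p)", OF _ h] i by (simp add: comp_def)
  have F_meas: "F \<in> borel_measurable Sn" unfolding F_def
    by (rule nn_integral_measurable_subprob_algebra2[OF _ measurable_prob_algebraD[OF K]])
       (use h_i in \<open>simp add: case_prod_beta\<close>)
  have "(\<integral>\<^sup>+w. h (z, w) \<partial>planted_kernel i z) = (\<integral>\<^sup>+s. F (s(i := z)) \<partial>Sn)" if z: "z \<in> space \<mu>'" for z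
    using nn_integral_bind[OF measurable_Pair2[OF h z] measurable_prob_algebraD[OF measurable_planted[OF z]], of i] i
    by (simp add: planted_kernel_def F_def)
  then have "(\<integral>\<^sup>+z. \<integral>\<^sup>+w. h (z, w) \<partial>planted_kernel i z \<partial>\<mu>') = (\<integral>\<^sup>+z. \<integral>\<^sup>+s. F (s(i := z)) \<partial>Sn \<partial>\<mu>')"
    by (rule nn_integral_cong)
  also have "\<dots> = (\<integral>\<^sup>+s. F s \<partial>Sn)"
    by (rule nn_integral_PiM_resample[OF prob_space_\<mu>' i F_meas])
  also have "\<dots> = (\<integral>\<^sup>+p. h (fst p i, snd p) \<partial>J)"
    unfolding F_def using nn_integral_joint_law[OF prob_space_Sn K h_i] by simp
  finally show ?thesis .
qed

lemma nn_integral_J_sym: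
  assumes h: "h \<in> borel_measurable (\<mu>' \<Otimes>\<^sub>M MW)"
  shows "(\<integral>\<^sup>+p. h p \<partial>J_sym) = (\<Sum>i<n. \<integral>\<^sup>+p. h (fst p i, snd p) \<partial>J) / of_nat n"
proof -
  have "(\<lambda>z. \<integral>\<^sup>+w. h (z, w) \<partial>planted_kernel i z) \<in> borel_measurable \<mu>'" for i
    by (rule nn_integral_measurable_subprob_algebra2[OF _ measurable_prob_algebraD[OF planted_kernel_measurable]])
       (use h in \<open>simp add: case_prod_beta\<close>)
  then have "(\<integral>\<^sup>+z. (\<Sum>i<n. \<integral>\<^sup>+w. h (z, w) \<partial>planted_kernel i z) / of_nat n \<partial>\<mu>') =
      (\<Sum>i<n. \<integral>\<^sup>+z. \<integral>\<^sup>+w. h (z, w) \<partial>planted_kernel i z \<partial>\<mu>') / of_nat n"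
    by (simp add: nn_integral_divide nn_integral_sum)
  moreover have "(\<integral>\<^sup>+p. h p \<partial>J_sym) = (\<integral>\<^sup>+z. \<integral>\<^sup>+w. h (z, w) \<partial>sym_kernel z \<partial>\<mu>')"
    by (rule nn_integral_joint_law[OF prob_space_\<mu>' sym_kernel_measurable h])
  moreover have "\<dots> = (\<integral>\<^sup>+z. (\<Sum>i<n. \<integral>\<^sup>+w. h (z, w) \<partial>planted_kernel i z) / of_nat n \<partial>\<mu>')"
    by (intro nn_integral_cong nn_integral_sym_kernel measurable_Pair2[OF h])
  ultimately show ?thesis using h by (simp add: nn_integral_planted_kernel)
qed

lemma mult_divide_of_nat_n: "of_nat n * (x :: ennreal) / of_nat n = x"
  using ennreal_mult_divide_eq[of "of_nat n" x] n_pos by (simp add: mult.commute)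

lemma sets_J: "sets J = sets (Sn \<Otimes>\<^sub>M MW)"
  by (rule sets_joint_law[OF prob_space_Sn K])

lemma sets_J_sym: "sets J_sym = sets (\<mu>' \<Otimes>\<^sub>M MW)"
  by (rule sets_joint_law[OF prob_space_\<mu>' sym_kernel_measurable])

lemma prob_space_W_law: "prob_space W_law"
  by (rule prob_space.prob_space_distr[OF prob_space_joint_law[OF prob_space_Sn K]])
     (simp add: measurable_cong_sets[OF sets_J refl])

lemma distr_J_sym_snd: "distr J_sym MW snd = W_law"
proof (rule measure_eqI)
  fix B assume "B \<in> sets (distr J_sym MW snd)"
  then have B: "B \<in> sets MW" by simp
  have ind: "(\<lambda>p. indicator B (snd p) :: ennreal) \<in> borel_measurable (\<mu>' \<Otimes>\<^sub>M MW)" using B by measurable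
  have "emeasure (distr J_sym MW snd) B = (\<integral>\<^sup>+p. indicator B (snd p) \<partial>J_sym)"
    using B by (simp add: measurable_cong_sets[OF sets_J_sym refl] nn_integral_distr
        nn_integral_indicator[symmetric] del: nn_integral_indicator)
  also have "\<dots> = (\<Sum>i<n. \<integral>\<^sup>+p. indicator B (snd p) \<partial>J) / of_nat n"
    using nn_integral_J_sym[OF ind] by simp
  also have "\<dots> = (\<integral>\<^sup>+p. indicator B (snd p) \<partial>J)"
    by (simp add: mult_divide_of_nat_n)
  also have "\<dots> = emeasure W_law B"
    using B by (simp add: measurable_cong_sets[OF sets_J refl] nn_integral_distr
        nn_integral_indicator[symmetric] del: nn_integral_indicator)
  finally show "emeasure (distr J_sym MW snd) B = emeasure W_law B" .
qed simp

lemma integral_J_sym: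
  fixes h :: "'z \<times> 'w \<Rightarrow> real"
  assumes h: "integrable J_sym h" and h_i: "\<And>i. i < n \<Longrightarrow> integrable J (\<lambda>p. h (fst p i, snd p))"
  shows "real n * (\<integral>p. h p \<partial>J_sym) = (\<Sum>i<n. \<integral>p. h (fst p i, snd p) \<partial>J)"
proof -
  have nn_part: "real n * enn2real (\<integral>\<^sup>+p. ennreal (f p) \<partial>J_sym) =
      (\<Sum>i<n. enn2real (\<integral>\<^sup>+p. ennreal (f (fst p i, snd p)) \<partial>J))"
    if f: "f \<in> borel_measurable (\<mu>' \<Otimes>\<^sub>M MW)"
      and fin: "\<And>i. i < n \<Longrightarrow> (\<integral>\<^sup>+p. ennreal (f (fst p i, snd p)) \<partial>J) \<noteq> \<infinity>" for f
  proof -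
    have "of_nat n * (\<integral>\<^sup>+p. ennreal (f p) \<partial>J_sym) = (\<Sum>i<n. \<integral>\<^sup>+p. ennreal (f (fst p i, snd p)) \<partial>J)"
      using nn_integral_J_sym[of "\<lambda>p. ennreal (f p)"] f
      by (simp add: ennreal_times_divide mult_divide_of_nat_n)
    then have "enn2real (of_nat n * (\<integral>\<^sup>+p. ennreal (f p) \<partial>J_sym)) =
        enn2real (\<Sum>i<n. \<integral>\<^sup>+p. ennreal (f (fst p i, snd p)) \<partial>J)"
      by simp
    moreover have "enn2real (\<Sum>i<n. \<integral>\<^sup>+p. ennreal (f (fst p i, snd p)) \<partial>J) =
        (\<Sum>i<n. enn2real (\<integral>\<^sup>+p. ennreal (f (fst p i, snd p)) \<partial>J))"
      using fin by (subst enn2real_sum) (simp_all add: less_top comp_def)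
    ultimately show ?thesis by (simp add: enn2real_mult)
  qed
  have h_meas: "h \<in> borel_measurable (\<mu>' \<Otimes>\<^sub>M MW)"
    using borel_measurable_integrable[OF h] by (simp add: measurable_cong_sets[OF sets_J_sym refl])
  have "real n * (\<integral>p. h p \<partial>J_sym) =
      real n * enn2real (\<integral>\<^sup>+p. ennreal (h p) \<partial>J_sym) - real n * enn2real (\<integral>\<^sup>+p. ennreal (- h p) \<partial>J_sym)"
    using real_lebesgue_integral_def[OF h] by (simp add: right_diff_distrib)
  also have "\<dots> = (\<Sum>i<n. enn2real (\<integral>\<^sup>+p. ennreal (h (fst p i, snd p)) \<partial>J)
      - enn2real (\<integral>\<^sup>+p. ennreal (- h (fst p i, snd p)) \<partial>J))"
    using h_i h_meas
    by (simp add: nn_part[of h] nn_part[of "\<lambda>p. - h p"] sum_subtractf real_integrable_def)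
  also have "\<dots> = (\<Sum>i<n. \<integral>p. h (fst p i, snd p) \<partial>J)"
    using h_i by (intro sum.cong refl) (simp add: real_lebesgue_integral_def)
  finally show ?thesis .
qed

lemma integral_emp_risk_J_sym:
  fixes a :: "'w \<Rightarrow> 'z \<Rightarrow> real"
  assumes a: "integrable J_sym (\<lambda>(z, w). a w z)"
    and a_i: "\<And>i. i < n \<Longrightarrow> integrable J (\<lambda>(s, w). a w (s i))"
  shows "(\<integral>(z, w). a w z \<partial>J_sym) = (\<integral>(s, w). emp_risk n a w s \<partial>J)"
proof -
  have "real n * (\<integral>(z, w). a w z \<partial>J_sym) = (\<Sum>i<n. \<integral>(s, w). a w (s i) \<partial>J)"
    using integral_J_sym[OF a] a_i by (simp add: case_prod_beta')
  also have "\<dots> = real n * (\<integral>(s, w). emp_risk n a w s \<partial>J)"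
    using a_i n_pos
    by (simp add: emp_risk_def case_prod_beta' Bochner_Integration.integral_sum[symmetric])
  finally show ?thesis using n_pos by simp
qed

lemma space_Sn_coordinate: "s \<in> space Sn \<Longrightarrow> i < n \<Longrightarrow> s i \<in> space \<mu>'"
  by (auto simp: space_PiM)

lemma sets_prod_W_law: "sets (M \<Otimes>\<^sub>M W_law) = sets (M \<Otimes>\<^sub>M MW)"
  by (rule sets_pair_measure_cong) simp_all

lemma integral_J_sum_coordinates:
  fixes g :: "'z \<times> 'w \<Rightarrow> real" and h :: "'w \<Rightarrow> real"
  assumes g: "g \<in> borel_measurable (\<mu>' \<Otimes>\<^sub>M MW)"
    and g_bound: "\<And>x. x \<in> space (\<mu>' \<Otimes>\<^sub>M MW) \<Longrightarrow> \<bar>g x\<bar> \<le> B"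
    and h: "h \<in> borel_measurable MW" and h_bound: "\<And>w. w \<in> space MW \<Longrightarrow> \<bar>h w\<bar> \<le> B"
  shows "(\<integral>p. (\<Sum>i<n. g (fst p i, snd p) - h (snd p)) \<partial>J) =
           real n * ((\<integral>x. g x \<partial>J_sym) - (\<integral>w. h w \<partial>W_law))"
proof -
  have space_J: "space J = space Sn \<times> space MW"
    using sets_eq_imp_space_eq[OF sets_J] by (simp add: space_pair_measure)
  have g_int: "integrable J (\<lambda>p. g (fst p i, snd p))" if i: "i < n" for i
  proof (rule integrable_bounded_on_space[OF prob_space_joint_law[OF prob_space_Sn K], where B = B])
    show "(\<lambda>p. g (fst p i, snd p)) \<in> borel_measurable J"
      using measurable_compose[of "\<lambda>p. (fst p i, snd p)", OF _ g] i
      by (simp add: comp_def measurable_cong_sets[OF sets_J refl])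
    fix p assume "p \<in> space J"
    then show "\<bar>g (fst p i, snd p)\<bar> \<le> B"
      using g_bound space_Sn_coordinate[OF _ i, of "fst p"] by (auto simp: space_J space_pair_measure)
  qed
  have h_int: "integrable J (\<lambda>p. h (snd p))"
    using h h_bound
    by (intro integrable_bounded_on_space[OF prob_space_joint_law[OF prob_space_Sn K], where B = B])
       (auto simp: measurable_cong_sets[OF sets_J refl] space_J)
  have "integrable J_sym g"
    using g g_bound sets_eq_imp_space_eq[OF sets_J_sym]
    by (intro integrable_bounded_on_space[OF prob_space_joint_law[OF prob_space_\<mu>' sym_kernel_measurable], where B = B])
       (auto simp: measurable_cong_sets[OF sets_J_sym refl])
  then have "(\<Sum>i<n. \<integral>p. g (fst p i, snd p) \<partial>J) = real n * (\<integral>x. g x \<partial>J_sym)"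
    using integral_J_sym g_int by simp
  moreover have "(\<integral>p. h (snd p) \<partial>J) = (\<integral>w. h w \<partial>W_law)"
    using h by (subst integral_distr) (auto simp: measurable_cong_sets[OF sets_J refl])
  moreover have "(\<integral>p. (\<Sum>i<n. g (fst p i, snd p) - h (snd p)) \<partial>J) =
      (\<Sum>i<n. (\<integral>p. g (fst p i, snd p) \<partial>J) - (\<integral>p. h (snd p) \<partial>J))"
    using g_int h_int
    by (subst Bochner_Integration.integral_sum) (auto intro!: sum.cong Bochner_Integration.integral_diff)
  ultimately show ?thesis by (simp add: sum_subtractf right_diff_distrib)
qed

lemma Donsker_Varadhan_J_sym_le_KL_div:
  fixes g :: "'z \<times> 'w \<Rightarrow> real"
  assumes g: "g \<in> borel_measurable (\<mu>' \<Otimes>\<^sub>M W_law)"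
    and g_bound: "\<And>x. x \<in> space (\<mu>' \<Otimes>\<^sub>M W_law) \<Longrightarrow> \<bar>g x\<bar> \<le> B"
    and KL_fin: "KL_div J (Sn \<Otimes>\<^sub>M W_law) \<noteq> \<infinity>"
  shows "real n * ((\<integral>x. g x \<partial>J_sym) - ln (\<integral>x. exp (g x) \<partial>(\<mu>' \<Otimes>\<^sub>M W_law)))
           \<le> enn2real (KL_div J (Sn \<Otimes>\<^sub>M W_law))"
proof -
  let ?Z = "partition_fun \<mu>' g"
  have Z_meas: "?Z \<in> borel_measurable W_law"
    using partition_fun_measurable[OF prob_space_\<mu>' prob_space_W_law g, of B] g_bound by simp
  have ln_Z_bound: "\<bar>ln (?Z w)\<bar> \<le> B" if "w \<in> space W_law" for w
    using abs_ln_partition_fun_le[OF prob_space_\<mu>' prob_space_W_law g, of B] g_bound that by simp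
  define G where "G = (\<lambda>p. \<Sum>i<n. g (fst p i, snd p) - ln (?Z (snd p)))"
  have G_meas: "G \<in> borel_measurable (Sn \<Otimes>\<^sub>M W_law)"
    using measurable_sum_minus_ln_partition_fun[OF prob_space_\<mu>' prob_space_W_law g, of B n] g_bound
    by (simp add: G_def)
  have G_bound: "\<bar>G p\<bar> \<le> real n * (2 * B)" if "p \<in> space (Sn \<Otimes>\<^sub>M W_law)" for p
    using abs_sum_minus_ln_partition_fun_le[OF prob_space_\<mu>' prob_space_W_law g, where B = B and n = n and p = p] g_bound that
    by (simp add: G_def)
  have "(\<integral>p. G p \<partial>J) - ln (\<integral>p. exp (G p) \<partial>(Sn \<Otimes>\<^sub>M W_law)) \<le> enn2real (KL_div J (Sn \<Otimes>\<^sub>M W_law))"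
    by (rule Donsker_Varadhan_le_KL_div[OF prob_space_joint_law[OF prob_space_Sn K]
          prob_space_pair[OF prob_space_Sn prob_space_W_law] _ G_meas _ KL_fin])
       (use sets_J sets_prod_W_law G_bound in simp_all)
  moreover have "(\<integral>p. exp (G p) \<partial>(Sn \<Otimes>\<^sub>M W_law)) = 1"
    using integral_exp_sum_minus_ln_partition_fun[OF prob_space_\<mu>' prob_space_W_law g, of B n] g_bound
    by (simp add: G_def)
  moreover have "(\<integral>p. G p \<partial>J) = real n * ((\<integral>x. g x \<partial>J_sym) - (\<integral>w. ln (?Z w) \<partial>W_law))"
    unfolding G_def
  proof (rule integral_J_sum_coordinates)
    show "g \<in> borel_measurable (\<mu>' \<Otimes>\<^sub>M MW)"
      using g by (simp add: measurable_cong_sets[OF sets_prod_W_law refl])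
    show "(\<lambda>w. ln (?Z w)) \<in> borel_measurable MW"
      using Z_meas by (simp add: measurable_cong_sets[OF sets_distr refl])
  qed (use g_bound ln_Z_bound in \<open>auto simp: space_pair_measure\<close>)
  moreover have "real n * ((\<integral>x. g x \<partial>J_sym) - ln (\<integral>x. exp (g x) \<partial>(\<mu>' \<Otimes>\<^sub>M W_law)))
      \<le> real n * ((\<integral>x. g x \<partial>J_sym) - (\<integral>w. ln (?Z w) \<partial>W_law))"
    using integral_ln_partition_fun_le[OF prob_space_\<mu>' prob_space_W_law g, of B] g_bound
    by (intro mult_left_mono) simp_all
  ultimately show ?thesis by simp
qed

lemma mutual_info_J_sym_le:
  assumes r: "0 \<le> r" and MI: "mutual_info Sn MW J \<le> ennreal r"
  shows "mutual_info \<mu>' MW J_sym \<le> ennreal (r / real n)"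
proof -
  have KL: "KL_div J (Sn \<Otimes>\<^sub>M W_law) \<le> ennreal r"
    using MI by (simp add: mutual_info_def distr_joint_law_fst[OF prob_space_Sn K])
  then have KL_fin: "KL_div J (Sn \<Otimes>\<^sub>M W_law) \<noteq> \<infinity>" by (auto simp: top_unique)
  have KL_real: "enn2real (KL_div J (Sn \<Otimes>\<^sub>M W_law)) \<le> r"
    using KL r by (simp add: enn2real_leI)
  have "mutual_info \<mu>' MW J_sym = KL_div J_sym (\<mu>' \<Otimes>\<^sub>M W_law)"
    by (simp add: mutual_info_def distr_joint_law_fst[OF prob_space_\<mu>' sym_kernel_measurable] distr_J_sym_snd)
  also have "\<dots> \<le> ennreal (r / real n)"
  proof (rule KL_div_le_of_Donsker_Varadhan[OF prob_space_joint_law[OF prob_space_\<mu>' sym_kernel_measurable]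
        prob_space_pair[OF prob_space_\<mu>' prob_space_W_law]])
    show "sets J_sym = sets (\<mu>' \<Otimes>\<^sub>M W_law)" using sets_J_sym sets_prod_W_law by simp
    show "0 \<le> r / real n" using r by simp
    show "Donsker_Varadhan_le J_sym (\<mu>' \<Otimes>\<^sub>M W_law) (r / real n)"
      unfolding Donsker_Varadhan_le_def
    proof (intro allI impI)
      fix g :: "'z \<times> 'w \<Rightarrow> real" and B
      assume "g \<in> borel_measurable (\<mu>' \<Otimes>\<^sub>M W_law)" "\<forall>x\<in>space (\<mu>' \<Otimes>\<^sub>M W_law). \<bar>g x\<bar> \<le> B"
      then have "real n * ((\<integral>x. g x \<partial>J_sym) - ln (\<integral>x. exp (g x) \<partial>(\<mu>' \<Otimes>\<^sub>M W_law))) \<le> r"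
        using Donsker_Varadhan_J_sym_le_KL_div[of g B] KL_fin KL_real by auto
      then show "(\<integral>x. g x \<partial>J_sym) - ln (\<integral>x. exp (g x) \<partial>(\<mu>' \<Otimes>\<^sub>M W_law)) \<le> r / real n"
        using n_pos by (simp add: field_simps)
    qed
  qed
  finally show ?thesis .
qed

lemma integral_INF_le_J_sym:
  fixes a :: "'w \<Rightarrow> 'z \<Rightarrow> real"
  assumes bdd: "\<And>s. s \<in> space Sn \<Longrightarrow> bdd_below ((\<lambda>w. emp_risk n a w s) ` space MW)"
    and INF_int: "integrable Sn (\<lambda>s. INF w \<in> space MW. emp_risk n a w s)"
    and a: "integrable J_sym (\<lambda>(z, w). a w z)"
    and a_i: "\<And>i. i < n \<Longrightarrow> integrable J (\<lambda>(s, w). a w (s i))"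
  shows "(\<integral>s. (INF w \<in> space MW. emp_risk n a w s) \<partial>Sn) \<le> (\<integral>(z, w). a w z \<partial>J_sym)"
proof -
  have emp_int: "integrable J (\<lambda>(s, w). emp_risk n a w s)"
    using a_i unfolding emp_risk_def
    by (simp add: case_prod_beta') (intro integrable_divide Bochner_Integration.integrable_sum; simp)
  have "(\<integral>s. (INF w \<in> space MW. emp_risk n a w s) \<partial>Sn) \<le> (\<integral>(s, w). emp_risk n a w s \<partial>J)"
    using integral_INF_le_integral_joint_law[OF prob_space_Sn K, of "\<lambda>w s. emp_risk n a w s"]
      bdd INF_int emp_int by simp
  also have "\<dots> = (\<integral>(z, w). a w z \<partial>J_sym)"
    by (rule integral_emp_risk_J_sym[OF a a_i, symmetric])
  finally show ?thesis .
qed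

end

theorem theorem11:
  fixes MZ :: "'z measure" and MW :: "'w measure"
    and \<mu> \<mu>' :: "'z measure"
    and loss aux :: "'w \<Rightarrow> 'z \<Rightarrow> real"
    and n :: nat and r :: real
  assumes n_pos: "n \<ge> 1"
    and r_nonneg: "r \<ge> 0"
    and mu: "prob_space \<mu>" "sets \<mu> = sets MZ"
    and mu': "prob_space \<mu>'" "sets \<mu>' = sets MZ"
    and loss_meas: "(\<lambda>(w, z). loss w z) \<in> borel_measurable (MW \<Otimes>\<^sub>M MZ)"
    and loss_nonneg: "\<And>w z. loss w z \<ge> 0"
    and aux_meas: "(\<lambda>(w, z). aux w z) \<in> borel_measurable (MW \<Otimes>\<^sub>M MZ)"
    \<comment> \<open>all expectations are well defined and finite:\<close>
    and L_fin: "\<And>w. w \<in> space MW \<Longrightarrow> integrable \<mu> (loss w)"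
    and inf_bdd: "\<And>s. s \<in> space (PiM {..<n} (\<lambda>_. \<mu>')) \<Longrightarrow>
          bdd_below ((\<lambda>w. emp_risk n aux w s) ` space MW)"
    and vn_fin: "integrable (PiM {..<n} (\<lambda>_. \<mu>'))
          (\<lambda>s. INF w \<in> space MW. emp_risk n aux w s)"
    and exp_fin_n: "\<And>K i. K \<in> PiM {..<n} (\<lambda>_. \<mu>') \<rightarrow>\<^sub>M prob_algebra MW \<Longrightarrow> i < n \<Longrightarrow>
          integrable (joint_law (PiM {..<n} (\<lambda>_. \<mu>')) K MW) (\<lambda>(s, w). loss w (s i)) \<and>
          integrable (joint_law (PiM {..<n} (\<lambda>_. \<mu>')) K MW) (\<lambda>(s, w). aux w (s i)) \<and>
          integrable (joint_law (PiM {..<n} (\<lambda>_. \<mu>')) K MW) (\<lambda>(s, w). pop_risk \<mu> loss w)"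
    and exp_fin_1: "\<And>K. K \<in> \<mu>' \<rightarrow>\<^sub>M prob_algebra MW \<Longrightarrow>
          integrable (joint_law \<mu>' K MW) (\<lambda>(z, w). loss w z) \<and>
          integrable (joint_law \<mu>' K MW) (\<lambda>(z, w). aux w z) \<and>
          integrable (joint_law \<mu>' K MW) (\<lambda>(z, w). pop_risk \<mu> loss w)"
  defines "Sn \<equiv> PiM {..<n} (\<lambda>_. \<mu>')"
    and "v_n \<equiv> (\<integral>s. (INF w \<in> space MW. emp_risk n aux w s) \<partial>(PiM {..<n} (\<lambda>_. \<mu>')))"
  shows
    "(SUP K \<in> {K \<in> Sn \<rightarrow>\<^sub>M prob_algebra MW. mutual_info Sn MW (joint_law Sn K MW) \<le> ennreal r}.
        ereal (\<integral>(s, w). pop_risk \<mu> loss w - emp_risk n loss w s \<partial>(joint_law Sn K MW)))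
     \<le> (SUP K \<in> {K \<in> \<mu>' \<rightarrow>\<^sub>M prob_algebra MW.
                    mutual_info \<mu>' MW (joint_law \<mu>' K MW) \<le> ennreal (r / real n) \<and>
                    (\<integral>(z, w). aux w z \<partial>(joint_law \<mu>' K MW)) \<ge> v_n}.
        ereal (\<integral>(z, w). pop_risk \<mu> loss w - loss w z \<partial>(joint_law \<mu>' K MW)))
   \<and> (SUP K \<in> {K \<in> \<mu>' \<rightarrow>\<^sub>M prob_algebra MW.
                    mutual_info \<mu>' MW (joint_law \<mu>' K MW) \<le> ennreal (r / real n) \<and>
                    (\<integral>(z, w). aux w z \<partial>(joint_law \<mu>' K MW)) \<ge> v_n}.
        ereal (\<integral>(z, w). pop_risk \<mu> loss w - loss w z \<partial>(joint_law \<mu>' K MW)))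
     \<le> (SUP K \<in> {K \<in> \<mu>' \<rightarrow>\<^sub>M prob_algebra MW.
                    mutual_info \<mu>' MW (joint_law \<mu>' K MW) \<le> ennreal (r / real n)}.
        ereal (\<integral>(z, w). pop_risk \<mu> loss w - loss w z \<partial>(joint_law \<mu>' K MW)))"
proof -
  have symmetrization:
    "\<exists>K'. K' \<in> \<mu>' \<rightarrow>\<^sub>M prob_algebra MW \<and>
       mutual_info \<mu>' MW (joint_law \<mu>' K' MW) \<le> ennreal (r / real n) \<and>
       v_n \<le> (\<integral>(z, w). aux w z \<partial>joint_law \<mu>' K' MW) \<and>
       (\<integral>(s, w). pop_risk \<mu> loss w - emp_risk n loss w s \<partial>joint_law Sn K MW) =
         (\<integral>(z, w). pop_risk \<mu> loss w - loss w z \<partial>joint_law \<mu>' K' MW)"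
    if K: "K \<in> Sn \<rightarrow>\<^sub>M prob_algebra MW" and MI: "mutual_info Sn MW (joint_law Sn K MW) \<le> ennreal r" for K
  proof -
    interpret symmetrized_kernel \<mu>' MW n K
      using mu'(1) n_pos K unfolding Sn_def by (rule symmetrized_kernel.intro)
    note int_n = exp_fin_n[OF K[unfolded Sn_def]] and int_1 = exp_fin_1[OF sym_kernel_measurable]
    have "v_n \<le> (\<integral>(z, w). aux w z \<partial>J_sym)"
      unfolding v_n_def using inf_bdd vn_fin int_1 int_n by (intro integral_INF_le_J_sym) auto
    moreover have "(\<integral>(z, w). pop_risk \<mu> loss w - loss w z \<partial>J_sym) =
        (\<integral>(s, w). emp_risk n (\<lambda>w z. pop_risk \<mu> loss w - loss w z) w s \<partial>J)"
      using int_1 int_n by (intro integral_emp_risk_J_sym) (auto simp: case_prod_beta')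
    ultimately show ?thesis
      using sym_kernel_measurable mutual_info_J_sym_le[OF r_nonneg MI[unfolded Sn_def]] n_pos
      by (intro exI[of _ sym_kernel]) (simp add: Sn_def emp_risk_const_minus)
  qed
  show ?thesis
    by (intro conjI SUP_mono SUP_subset_mono) (auto dest!: symmetrization)
qed

end
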